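(* Let $\mathcal E$ be an exact category. (1) For any subset $N\subseteq\mathsf M(\mathcal E)$, the subcategory $\mathcal D_N:=\{X\in\mathcal E\mid[X]\in N\}$ is closed under S-equivalences. (2) The maps $\mathcal D\mapsto\mathsf M_{\mathcal D}:=\{[X]\mid X\in\mathcal D\}$ and $N\mapsto\mathcal D_N$ are mutually inverse bijections between the set of subcategories of $\mathcal E$ closed under S-equivalences and the power set of $\mathsf M(\mathcal E)$.
   Context: All categories are skeletally small; subcategories are full and closed under isomorphisms. An exact category $\mathcal E$ is an additive full subcategory of an abelian category closed under extensions; conflations are short exact sequences with all terms in $\mathcal E$; an inflation is the first map of a conflation. The Grothendieck monoid $\mathsf M(\mathcal E)$ is the commutative monoid with a map $X\mapsto[X]$ on isomorphism classes with $[0]=0$ and $[Y]=[X]+[Z]$ for each conflation $0\to X\to Y\to Z\to0$, universal among such maps to commutative monoids. An admissible subobject series of $X$ is a chain $0=X_0\to X_1\to\cdots\to X_n=X$ of inflations (each $X_{i-1}\to X_i$ an inflation compatible with the inflations into $X$), with factors $X_i/X_{i-1}$ the cokernels. Objects $X,Y$ are S-equivalent, $X\sim_SY$, if they have admissible subobject series $(X_i)_{i=0}^n$, $(Y_i)_{i=0}^n$ of the same length and a permutation $\sigma$ of $\{1,\dots,n\}$ with $X_i/X_{i-1}\cong Y_{\sigma(i)}/Y_{\sigma(i)-1}$ for all $i$. A subcategory $\mathcal D$ is closed under S-equivalences if $X\in\mathcal D$ and $X\sim_SY$ imply $Y\in\mathcal D$. *)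

theory Defs
  imports Main "HOL-Library.Multiset"
begin

record ('o, 'm) cat =
  Ob  :: "'o set"
  Hm  :: "'o \<Rightarrow> 'o \<Rightarrow> 'm set"
  cmp :: "'m \<Rightarrow> 'm \<Rightarrow> 'm"   (* cmp g f = g o f *)
  idt :: "'o \<Rightarrow> 'm"

definition is_category :: "('o, 'm) cat \<Rightarrow> bool" where
  "is_category C \<longleftrightarrow>
     (\<forall>a\<in>Ob C. idt C a \<in> Hm C a a) \<and>
     (\<forall>a b. Hm C a b \<noteq> {} \<longrightarrow> a \<in> Ob C \<and> b \<in> Ob C) \<and>
     (\<forall>a\<in>Ob C. \<forall>b\<in>Ob C. \<forall>c\<in>Ob C. \<forall>f\<in>Hm C a b. \<forall>g\<in>Hm C b c. cmp C g f \<in> Hm C a c) \<and>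
     (\<forall>a\<in>Ob C. \<forall>b\<in>Ob C. \<forall>c\<in>Ob C. \<forall>d\<in>Ob C. \<forall>f\<in>Hm C a b. \<forall>g\<in>Hm C b c. \<forall>h\<in>Hm C c d.
        cmp C h (cmp C g f) = cmp C (cmp C h g) f) \<and>
     (\<forall>a\<in>Ob C. \<forall>b\<in>Ob C. \<forall>f\<in>Hm C a b. cmp C f (idt C a) = f \<and> cmp C (idt C b) f = f)"

definition is_iso :: "('o, 'm) cat \<Rightarrow> 'o \<Rightarrow> 'o \<Rightarrow> 'm \<Rightarrow> bool" where
  "is_iso C a b f \<longleftrightarrow> f \<in> Hm C a b \<and>
     (\<exists>g\<in>Hm C b a. cmp C g f = idt C a \<and> cmp C f g = idt C b)"

definition iso_obj :: "('o, 'm) cat \<Rightarrow> 'o \<Rightarrow> 'o \<Rightarrow> bool" where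
  "iso_obj C a b \<longleftrightarrow> (\<exists>f. is_iso C a b f)"

definition zero_obj :: "('o, 'm) cat \<Rightarrow> 'o \<Rightarrow> bool" where
  "zero_obj C z \<longleftrightarrow> z \<in> Ob C \<and>
     (\<forall>a\<in>Ob C. (\<exists>!f. f \<in> Hm C z a) \<and> (\<exists>!f. f \<in> Hm C a z))"

definition zero_mor :: "('o, 'm) cat \<Rightarrow> 'o \<Rightarrow> 'o \<Rightarrow> 'm \<Rightarrow> bool" where
  "zero_mor C a b f \<longleftrightarrow> f \<in> Hm C a b \<and>
     (\<exists>z. zero_obj C z \<and> (\<exists>u\<in>Hm C a z. \<exists>v\<in>Hm C z b. f = cmp C v u))"

definition is_mono :: "('o, 'm) cat \<Rightarrow> 'o \<Rightarrow> 'o \<Rightarrow> 'm \<Rightarrow> bool" where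
  "is_mono C a b f \<longleftrightarrow> f \<in> Hm C a b \<and>
     (\<forall>w\<in>Ob C. \<forall>h1\<in>Hm C w a. \<forall>h2\<in>Hm C w a. cmp C f h1 = cmp C f h2 \<longrightarrow> h1 = h2)"

definition is_epi :: "('o, 'm) cat \<Rightarrow> 'o \<Rightarrow> 'o \<Rightarrow> 'm \<Rightarrow> bool" where
  "is_epi C a b f \<longleftrightarrow> f \<in> Hm C a b \<and>
     (\<forall>w\<in>Ob C. \<forall>h1\<in>Hm C b w. \<forall>h2\<in>Hm C b w. cmp C h1 f = cmp C h2 f \<longrightarrow> h1 = h2)"

definition is_kernel :: "('o, 'm) cat \<Rightarrow> 'o \<Rightarrow> 'm \<Rightarrow> 'o \<Rightarrow> 'm \<Rightarrow> 'o \<Rightarrow> bool" where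
  "is_kernel C K k a g b \<longleftrightarrow> k \<in> Hm C K a \<and> g \<in> Hm C a b \<and> zero_mor C K b (cmp C g k) \<and>
     (\<forall>w\<in>Ob C. \<forall>h\<in>Hm C w a. zero_mor C w b (cmp C g h) \<longrightarrow>
        (\<exists>!u. u \<in> Hm C w K \<and> h = cmp C k u))"

definition is_cokernel :: "('o, 'm) cat \<Rightarrow> 'o \<Rightarrow> 'm \<Rightarrow> 'o \<Rightarrow> 'm \<Rightarrow> 'o \<Rightarrow> bool" where
  "is_cokernel C a f b c Q \<longleftrightarrow> f \<in> Hm C a b \<and> c \<in> Hm C b Q \<and> zero_mor C a Q (cmp C c f) \<and>
     (\<forall>w\<in>Ob C. \<forall>h\<in>Hm C b w. zero_mor C a w (cmp C h f) \<longrightarrow>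
        (\<exists>!u. u \<in> Hm C Q w \<and> h = cmp C u c))"

definition is_product :: "('o, 'm) cat \<Rightarrow> 'o \<Rightarrow> 'o \<Rightarrow> 'o \<Rightarrow> 'm \<Rightarrow> 'm \<Rightarrow> bool" where
  "is_product C a b P p1 p2 \<longleftrightarrow> P \<in> Ob C \<and> p1 \<in> Hm C P a \<and> p2 \<in> Hm C P b \<and>
     (\<forall>w\<in>Ob C. \<forall>f\<in>Hm C w a. \<forall>g\<in>Hm C w b.
        (\<exists>!u. u \<in> Hm C w P \<and> cmp C p1 u = f \<and> cmp C p2 u = g))"

definition is_coproduct :: "('o, 'm) cat \<Rightarrow> 'o \<Rightarrow> 'o \<Rightarrow> 'o \<Rightarrow> 'm \<Rightarrow> 'm \<Rightarrow> bool" where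
  "is_coproduct C a b S i1 i2 \<longleftrightarrow> S \<in> Ob C \<and> i1 \<in> Hm C a S \<and> i2 \<in> Hm C b S \<and>
     (\<forall>w\<in>Ob C. \<forall>f\<in>Hm C a w. \<forall>g\<in>Hm C b w.
        (\<exists>!u. u \<in> Hm C S w \<and> cmp C u i1 = f \<and> cmp C u i2 = g))"

definition abelian :: "('o, 'm) cat \<Rightarrow> bool" where
  "abelian C \<longleftrightarrow> is_category C \<and>
     (\<exists>z. zero_obj C z) \<and>
     (\<forall>a\<in>Ob C. \<forall>b\<in>Ob C. \<exists>P p1 p2. is_product C a b P p1 p2) \<and>
     (\<forall>a\<in>Ob C. \<forall>b\<in>Ob C. \<exists>S i1 i2. is_coproduct C a b S i1 i2) \<and>
     (\<forall>a\<in>Ob C. \<forall>b\<in>Ob C. \<forall>g\<in>Hm C a b. \<exists>K k. K \<in> Ob C \<and> is_kernel C K k a g b) \<and>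
     (\<forall>a\<in>Ob C. \<forall>b\<in>Ob C. \<forall>f\<in>Hm C a b. \<exists>Q c. Q \<in> Ob C \<and> is_cokernel C a f b c Q) \<and>
     (\<forall>a\<in>Ob C. \<forall>b\<in>Ob C. \<forall>f. is_mono C a b f \<longrightarrow> (\<exists>c\<in>Ob C. \<exists>g. is_kernel C a f b g c)) \<and>
     (\<forall>a\<in>Ob C. \<forall>b\<in>Ob C. \<forall>f. is_epi C a b f \<longrightarrow> (\<exists>c\<in>Ob C. \<exists>g. is_cokernel C c g a f b))"

definition short_exact :: "('o, 'm) cat \<Rightarrow> 'o \<Rightarrow> 'm \<Rightarrow> 'o \<Rightarrow> 'm \<Rightarrow> 'o \<Rightarrow> bool" where
  "short_exact C X f Y g Z \<longleftrightarrow> X \<in> Ob C \<and> Y \<in> Ob C \<and> Z \<in> Ob C \<and>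
     is_kernel C X f Y g Z \<and> is_cokernel C X f Y g Z"

text \<open>Full subcategories are given by object sets closed under isomorphism.\<close>
definition iso_closed :: "('o, 'm) cat \<Rightarrow> 'o set \<Rightarrow> 'o set \<Rightarrow> bool" where
  "iso_closed C A D \<longleftrightarrow> (\<forall>X\<in>D. \<forall>Y\<in>A. iso_obj C X Y \<longrightarrow> Y \<in> D)"

definition exact_category :: "('o, 'm) cat \<Rightarrow> 'o set \<Rightarrow> bool" where
  "exact_category C E \<longleftrightarrow> abelian C \<and> E \<subseteq> Ob C \<and> iso_closed C (Ob C) E \<and>
     (\<exists>z\<in>E. zero_obj C z) \<and>
     (\<forall>a\<in>E. \<forall>b\<in>E. \<exists>P p1 p2. is_product C a b P p1 p2 \<and> P \<in> E) \<and>
     (\<forall>X\<in>E. \<forall>Z\<in>E. \<forall>Y f g. short_exact C X f Y g Z \<longrightarrow> Y \<in> E)"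

definition subcategory :: "('o, 'm) cat \<Rightarrow> 'o set \<Rightarrow> 'o set \<Rightarrow> bool" where
  "subcategory C E D \<longleftrightarrow> D \<subseteq> E \<and> iso_closed C E D"

definition conflation :: "('o, 'm) cat \<Rightarrow> 'o set \<Rightarrow> 'o \<Rightarrow> 'm \<Rightarrow> 'o \<Rightarrow> 'm \<Rightarrow> 'o \<Rightarrow> bool" where
  "conflation C E X f Y g Z \<longleftrightarrow> X \<in> E \<and> Y \<in> E \<and> Z \<in> E \<and> short_exact C X f Y g Z"

text \<open>Presentation: free commutative monoid on objects of E (multisets) modulo the
  congruence generated by [0] = 0 and [Y] = [X] + [Z] for conflations.\<close>
inductive gm_rel :: "('o, 'm) cat \<Rightarrow> 'o set \<Rightarrow> 'o multiset \<Rightarrow> 'o multiset \<Rightarrow> bool"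
  for C :: "('o, 'm) cat" and E :: "'o set" where
  gm_refl: "set_mset A \<subseteq> E \<Longrightarrow> gm_rel C E A A"
| gm_sym: "gm_rel C E A B \<Longrightarrow> gm_rel C E B A"
| gm_trans: "gm_rel C E A B \<Longrightarrow> gm_rel C E B D \<Longrightarrow> gm_rel C E A D"
| gm_add: "gm_rel C E A B \<Longrightarrow> set_mset D \<subseteq> E \<Longrightarrow> gm_rel C E (A + D) (B + D)"
| gm_zero: "z \<in> E \<Longrightarrow> zero_obj C z \<Longrightarrow> gm_rel C E {#z#} {#}"
| gm_confl: "conflation C E X f Y g Z \<Longrightarrow> gm_rel C E {#Y#} {#X, Z#}"

definition GM :: "('o, 'm) cat \<Rightarrow> 'o set \<Rightarrow> 'o multiset set set" where
  "GM C E = {A. set_mset A \<subseteq> E} // {(A, B). gm_rel C E A B}"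

definition cls :: "('o, 'm) cat \<Rightarrow> 'o set \<Rightarrow> 'o \<Rightarrow> 'o multiset set" where
  "cls C E X = {(A, B). gm_rel C E A B} `` {{#X#}}"

definition D_of :: "('o, 'm) cat \<Rightarrow> 'o set \<Rightarrow> 'o multiset set set \<Rightarrow> 'o set" where
  "D_of C E N = {X \<in> E. cls C E X \<in> N}"

definition M_of :: "('o, 'm) cat \<Rightarrow> 'o set \<Rightarrow> 'o set \<Rightarrow> 'o multiset set set" where
  "M_of C E D = cls C E ` D"

text \<open>Admissible subobject series X_0 \<rightarrow> ... \<rightarrow> X_n = X with X_0 = 0, each
  X_{i-1} \<rightarrow> X_i an inflation with chosen conflation X_{i-1} \<rightarrow> X_i \<rightarrow> F_i (F_i the factor).\<close>
definition adm_series :: "('o, 'm) cat \<Rightarrow> 'o set \<Rightarrow> 'o \<Rightarrow> nat \<Rightarrow> (nat \<Rightarrow> 'o) \<Rightarrow> (nat \<Rightarrow> 'm)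
    \<Rightarrow> (nat \<Rightarrow> 'm) \<Rightarrow> (nat \<Rightarrow> 'o) \<Rightarrow> bool" where
  "adm_series C E X n xs fs gs F \<longleftrightarrow> xs 0 \<in> E \<and> zero_obj C (xs 0) \<and> xs n = X \<and>
     (\<forall>i\<in>{1..n}. conflation C E (xs (i - 1)) (fs i) (xs i) (gs i) (F i))"

definition S_equiv :: "('o, 'm) cat \<Rightarrow> 'o set \<Rightarrow> 'o \<Rightarrow> 'o \<Rightarrow> bool" where
  "S_equiv C E X Y \<longleftrightarrow> (\<exists>n xs fs gs F ys hs ks G \<sigma>.
      adm_series C E X n xs fs gs F \<and> adm_series C E Y n ys hs ks G \<and>
      bij_betw \<sigma> {1..n} {1..n} \<and> (\<forall>i\<in>{1..n}. iso_obj C (F i) (G (\<sigma> i))))"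

definition closed_S :: "('o, 'm) cat \<Rightarrow> 'o set \<Rightarrow> 'o set \<Rightarrow> bool" where
  "closed_S C E D \<longleftrightarrow> (\<forall>X Y. X \<in> D \<and> S_equiv C E X Y \<longrightarrow> Y \<in> D)"

end

theory Submission
  imports Defs "HOL-Combinatorics.Permutations"
begin

text \<open>
  S-equivalent objects have the same class in \<open>M(\<E>)\<close>: the factors of an admissible series
  of \<open>X\<close> add up to \<open>[X]\<close>, and isomorphic objects have equal classes. This gives (1), and
  everything in (2) is formal except the converse: objects with the same class are joined by a
  chain of S-equivalences, so a subcategory closed under S-equivalences is a union of fibres of
  \<open>X \<mapsto> [X]\<close>.

  For the converse, say that \<open>X\<close> realises a finite multiset \<open>A\<close> of objects if some admissible
  series of \<open>X\<close> has factor multiset \<open>A\<close>. Two realisations of the same multiset are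
  S-equivalent; every multiset is realised, by successive split conflations
  \<open>X \<rightarrowtail> X \<times> Y \<twoheadrightarrow> Y\<close>; and a conflation with cokernel \<open>d\<close> turns a realisation of \<open>A\<close>
  into one of \<open>A + {d}\<close>. Hence "all realisations of \<open>A\<close> and of \<open>B\<close> are joined by chains of
  S-equivalences" is a congruence on multisets which contains the generating relations
  \<open>[0] = 0\<close> and \<open>[Y] = [X] + [Z]\<close> of \<open>M(\<E>)\<close> (for the latter, \<open>Y\<close> realises both \<open>{Y}\<close> and
  \<open>{X, Z}\<close>), so it contains the whole congruence presenting \<open>M(\<E>)\<close>.
\<close>

section \<open>Abelian categories\<close>

locale abelian_cat =
  fixes C :: "('o, 'm) cat"
  assumes abelian: "abelian C"
begin

lemma category: "is_category C"
  using abelian by (simp add: abelian_def)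

lemma idt_in_Hm: "a \<in> Ob C \<Longrightarrow> idt C a \<in> Hm C a a"
  using category by (simp add: is_category_def)

lemma Hm_Ob: "f \<in> Hm C a b \<Longrightarrow> a \<in> Ob C \<and> b \<in> Ob C"
  using category unfolding is_category_def by blast

lemma comp_in_Hm: "f \<in> Hm C a b \<Longrightarrow> g \<in> Hm C b c \<Longrightarrow> cmp C g f \<in> Hm C a c"
  using category Hm_Ob unfolding is_category_def by meson

lemma comp_assoc:
  "f \<in> Hm C a b \<Longrightarrow> g \<in> Hm C b c \<Longrightarrow> h \<in> Hm C c d \<Longrightarrow> cmp C h (cmp C g f) = cmp C (cmp C h g) f"
  using category Hm_Ob unfolding is_category_def by meson

lemma comp_idt_left: "f \<in> Hm C a b \<Longrightarrow> cmp C (idt C b) f = f"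
  using category Hm_Ob unfolding is_category_def by meson

lemma comp_idt_right: "f \<in> Hm C a b \<Longrightarrow> cmp C f (idt C a) = f"
  using category Hm_Ob unfolding is_category_def by meson

lemma zero_obj_Ob: "zero_obj C z \<Longrightarrow> z \<in> Ob C"
  by (simp add: zero_obj_def)

lemma zero_obj_from: "zero_obj C z \<Longrightarrow> a \<in> Ob C \<Longrightarrow> \<exists>!f. f \<in> Hm C z a"
  by (simp add: zero_obj_def)

lemma zero_obj_to: "zero_obj C z \<Longrightarrow> a \<in> Ob C \<Longrightarrow> \<exists>!f. f \<in> Hm C a z"
  by (simp add: zero_obj_def)

lemma zero_mor_unique:
  assumes "zero_mor C a b f" "zero_mor C a b g"
  shows "f = g"
proof -
  obtain z u v where z: "zero_obj C z" "u \<in> Hm C a z" "v \<in> Hm C z b" "f = cmp C v u"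
    using assms(1) by (auto simp: zero_mor_def)
  obtain z' u' v' where z': "zero_obj C z'" "u' \<in> Hm C a z'" "v' \<in> Hm C z' b" "g = cmp C v' u'"
    using assms(2) by (auto simp: zero_mor_def)
  obtain w where w: "w \<in> Hm C z z'"
    using zero_obj_from[OF z(1) zero_obj_Ob[OF z'(1)]] by blast
  have "u' = cmp C w u"
    using zero_obj_to[OF z'(1)] Hm_Ob[OF z(2)] comp_in_Hm[OF z(2) w] z'(2) by blast
  moreover have "v = cmp C v' w"
    using zero_obj_from[OF z(1)] Hm_Ob[OF z(3)] comp_in_Hm[OF w z'(3)] z(3) by blast
  ultimately show ?thesis
    using z z' comp_assoc[OF z(2) w z'(3)] by simp
qed

lemma zero_mor_ex: "a \<in> Ob C \<Longrightarrow> b \<in> Ob C \<Longrightarrow> \<exists>f. zero_mor C a b f"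
proof -
  assume ab: "a \<in> Ob C" "b \<in> Ob C"
  obtain z where z: "zero_obj C z" using abelian by (auto simp: abelian_def)
  obtain u v where "u \<in> Hm C a z" "v \<in> Hm C z b"
    using zero_obj_to[OF z ab(1)] zero_obj_from[OF z ab(2)] by blast
  then show ?thesis using z comp_in_Hm unfolding zero_mor_def by blast
qed

lemma zero_mor_comp_right:
  assumes "zero_mor C a b f" "h \<in> Hm C w a"
  shows "zero_mor C w b (cmp C f h)"
proof -
  obtain z u v where z: "zero_obj C z" "u \<in> Hm C a z" "v \<in> Hm C z b" "f = cmp C v u"
    using assms(1) by (auto simp: zero_mor_def)
  have "cmp C f h = cmp C v (cmp C u h)"
    using comp_assoc[OF assms(2) z(2) z(3)] z(4) by simp
  then show ?thesis
    unfolding zero_mor_def using z comp_in_Hm assms(2) by blast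
qed

lemma zero_mor_comp_left:
  assumes "zero_mor C a b f" "h \<in> Hm C b c"
  shows "zero_mor C a c (cmp C h f)"
proof -
  obtain z u v where z: "zero_obj C z" "u \<in> Hm C a z" "v \<in> Hm C z b" "f = cmp C v u"
    using assms(1) by (auto simp: zero_mor_def)
  have "cmp C h f = cmp C (cmp C h v) u"
    using comp_assoc[OF z(2) z(3) assms(2)] z(4) by simp
  then show ?thesis
    unfolding zero_mor_def using z comp_in_Hm assms(2) by blast
qed

lemma zero_mor_to_zero: "zero_obj C z \<Longrightarrow> f \<in> Hm C a z \<Longrightarrow> zero_mor C a z f"
  unfolding zero_mor_def using comp_idt_left idt_in_Hm zero_obj_Ob by metis

lemma zero_mor_from_zero: "zero_obj C z \<Longrightarrow> f \<in> Hm C z b \<Longrightarrow> zero_mor C z b f"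
  unfolding zero_mor_def using comp_idt_right idt_in_Hm zero_obj_Ob by metis

lemma is_iso_idt: "a \<in> Ob C \<Longrightarrow> is_iso C a a (idt C a)"
  unfolding is_iso_def using idt_in_Hm comp_idt_left by metis

lemma iso_obj_refl: "a \<in> Ob C \<Longrightarrow> iso_obj C a a"
  unfolding iso_obj_def using is_iso_idt by blast

lemma iso_obj_sym: "iso_obj C a b \<Longrightarrow> iso_obj C b a"
  unfolding iso_obj_def is_iso_def by blast

lemma zero_to_iso_short_exact:
  assumes z: "zero_obj C z" and f: "is_iso C X Y f"
  shows "\<exists>t. short_exact C z t X f Y"
proof -
  obtain g where f_Hm: "f \<in> Hm C X Y" and g: "g \<in> Hm C Y X" "cmp C g f = idt C X" "cmp C f g = idt C Y"
    using f by (auto simp: is_iso_def)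
  have XY: "X \<in> Ob C" "Y \<in> Ob C" using Hm_Ob[OF f_Hm] by auto
  obtain t where t: "t \<in> Hm C z X" using zero_obj_from[OF z XY(1)] by blast
  have ft: "zero_mor C z Y (cmp C f t)" using zero_mor_from_zero[OF z comp_in_Hm[OF t f_Hm]] .
  have "is_kernel C z t X f Y"
    unfolding is_kernel_def
  proof (intro conjI t f_Hm ft ballI impI)
    fix w h assume w: "w \<in> Ob C" and h: "h \<in> Hm C w X" and fh: "zero_mor C w Y (cmp C f h)"
    have "h = cmp C g (cmp C f h)"
      using comp_assoc[OF h f_Hm g(1)] g(2) comp_idt_left[OF h] by simp
    then have h0: "zero_mor C w X h" using zero_mor_comp_left[OF fh g(1)] by simp
    obtain u where u: "u \<in> Hm C w z" using zero_obj_to[OF z w] by blast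
    have "h = cmp C t u"
      using zero_mor_unique[OF h0 zero_mor_comp_left[OF zero_mor_to_zero[OF z u] t]] .
    then show "\<exists>!u. u \<in> Hm C w z \<and> h = cmp C t u" using u zero_obj_to[OF z w] by blast
  qed
  moreover have "is_cokernel C z t X f Y"
    unfolding is_cokernel_def
  proof (intro conjI t f_Hm ft ballI impI)
    fix w h assume "w \<in> Ob C" and h: "h \<in> Hm C X w"
    have "h = cmp C (cmp C h g) f"
      using comp_assoc[OF f_Hm g(1) h] g(2) comp_idt_right[OF h] by simp
    moreover have "u = cmp C h g" if "u \<in> Hm C Y w" "h = cmp C u f" for u
      using that comp_assoc[OF g(1) f_Hm that(1)] g(3) comp_idt_right[OF that(1)] by simp
    ultimately show "\<exists>!u. u \<in> Hm C Y w \<and> h = cmp C u f"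
      using comp_in_Hm[OF g(1) h] by blast
  qed
  ultimately show ?thesis using z XY zero_obj_Ob unfolding short_exact_def by blast
qed

lemma cokernel_of_kernel_of_epi:
  assumes k: "is_kernel C X k P g Y" and g: "is_epi C P Y g"
  shows "is_cokernel C X k P g Y"
proof -
  have PY: "P \<in> Ob C" "Y \<in> Ob C" using g Hm_Ob by (auto simp: is_epi_def)
  obtain c g' where cg: "c \<in> Ob C" "is_cokernel C c g' P g Y"
    using abelian PY g unfolding abelian_def by blast
  have "g' \<in> Hm C c P" "zero_mor C c Y (cmp C g g')" using cg(2) by (auto simp: is_cokernel_def)
  then obtain u where u: "u \<in> Hm C c X" "g' = cmp C k u"
    using k cg(1) unfolding is_kernel_def by blast
  show ?thesis
    unfolding is_cokernel_def
  proof (intro conjI ballI impI)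
    show "k \<in> Hm C X P" "g \<in> Hm C P Y" "zero_mor C X Y (cmp C g k)"
      using k by (auto simp: is_kernel_def)
    fix w h assume w: "w \<in> Ob C" and h: "h \<in> Hm C P w" and hk: "zero_mor C X w (cmp C h k)"
    have "zero_mor C c w (cmp C h g')"
      using zero_mor_comp_right[OF hk u(1)] comp_assoc[OF u(1) _ h] u(2) k
      by (auto simp: is_kernel_def)
    then show "\<exists>!u. u \<in> Hm C Y w \<and> h = cmp C u g"
      using cg(2) w h unfolding is_cokernel_def by blast
  qed
qed

lemma product_projection_short_exact:
  assumes P: "is_product C X Y P p1 p2"
  shows "\<exists>i. short_exact C X i P p2 Y"
proof -
  have XYP: "X \<in> Ob C" "Y \<in> Ob C" "P \<in> Ob C" and p: "p1 \<in> Hm C P X" "p2 \<in> Hm C P Y"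
    using P Hm_Ob by (auto simp: is_product_def)
  have pair: "\<And>w f g. w \<in> Ob C \<Longrightarrow> f \<in> Hm C w X \<Longrightarrow> g \<in> Hm C w Y \<Longrightarrow>
      \<exists>!u. u \<in> Hm C w P \<and> cmp C p1 u = f \<and> cmp C p2 u = g"
    using P by (auto simp: is_product_def)
  obtain zXY zYX where zXY: "zero_mor C X Y zXY" and zYX: "zero_mor C Y X zYX"
    using zero_mor_ex XYP by metis
  obtain i where i: "i \<in> Hm C X P" "cmp C p1 i = idt C X" "cmp C p2 i = zXY"
    using pair[OF XYP(1) idt_in_Hm[OF XYP(1)]] zXY unfolding zero_mor_def by blast
  obtain j where j: "j \<in> Hm C Y P" "cmp C p2 j = idt C Y"
    using pair[OF XYP(2) _ idt_in_Hm[OF XYP(2)]] zYX unfolding zero_mor_def by blast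
  have ker: "is_kernel C X i P p2 Y"
    unfolding is_kernel_def
  proof (intro conjI i(1) p(2) ballI impI)
    show "zero_mor C X Y (cmp C p2 i)" using i zXY by simp
    fix w h assume w: "w \<in> Ob C" and h: "h \<in> Hm C w P" and p2h: "zero_mor C w Y (cmp C p2 h)"
    have p1h: "cmp C p1 h \<in> Hm C w X" using comp_in_Hm[OF h p(1)] .
    have "cmp C p1 (cmp C i (cmp C p1 h)) = cmp C p1 h"
      using comp_assoc[OF p1h i(1) p(1)] i(2) comp_idt_left[OF p1h] by simp
    moreover have "cmp C p2 (cmp C i (cmp C p1 h)) = cmp C p2 h"
      using comp_assoc[OF p1h i(1) p(2)] i(3) zero_mor_comp_right[OF zXY p1h] p2h zero_mor_unique
      by metis
    ultimately have "h = cmp C i (cmp C p1 h)"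
      using pair[OF w p1h comp_in_Hm[OF h p(2)]] h comp_in_Hm[OF p1h i(1)] by blast
    moreover have "u = cmp C p1 h" if "u \<in> Hm C w X" "h = cmp C i u" for u
      using that comp_assoc[OF that(1) i(1) p(1)] i(2) comp_idt_left by simp
    ultimately show "\<exists>!u. u \<in> Hm C w X \<and> h = cmp C i u" using p1h by blast
  qed
  have "is_epi C P Y p2"
    unfolding is_epi_def
  proof (intro conjI p(2) ballI impI)
    fix w h1 h2 assume h: "h1 \<in> Hm C Y w" "h2 \<in> Hm C Y w" and "cmp C h1 p2 = cmp C h2 p2"
    then show "h1 = h2"
      using comp_assoc[OF j(1) p(2) h(1)] comp_assoc[OF j(1) p(2) h(2)] j(2) comp_idt_right by metis
  qed
  then show ?thesis
    using ker cokernel_of_kernel_of_epi XYP unfolding short_exact_def by blast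
qed

end

locale exact_cat =
  fixes C :: "('o, 'm) cat" and E :: "'o set"
  assumes exact: "exact_category C E"
begin

sublocale abelian_cat C
  using exact by unfold_locales (simp add: exact_category_def)

lemma E_Ob: "X \<in> E \<Longrightarrow> X \<in> Ob C"
  using exact by (auto simp: exact_category_def)

lemma zero_in_E: "\<exists>z\<in>E. zero_obj C z"
  using exact by (simp add: exact_category_def)

lemma split_conflation: "X \<in> E \<Longrightarrow> Y \<in> E \<Longrightarrow> \<exists>P f g. conflation C E X f P g Y"
  using exact product_projection_short_exact unfolding exact_category_def conflation_def by metis

lemma zero_to_iso_conflation:
  "z \<in> E \<Longrightarrow> zero_obj C z \<Longrightarrow> X \<in> E \<Longrightarrow> Y \<in> E \<Longrightarrow> is_iso C X Y f \<Longrightarrow>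
    \<exists>t. conflation C E z t X f Y"
  using zero_to_iso_short_exact unfolding conflation_def by blast

end

section \<open>The Grothendieck monoid\<close>

lemma gm_rel_set_mset: "gm_rel C E A B \<Longrightarrow> set_mset A \<subseteq> E \<and> set_mset B \<subseteq> E"
  by (induction rule: gm_rel.induct) (auto simp: conflation_def)

lemma gm_rel_add: "gm_rel C E A B \<Longrightarrow> gm_rel C E A' B' \<Longrightarrow> gm_rel C E (A + A') (B + B')"
  by (metis gm_add gm_rel_set_mset gm_trans add.commute)

lemma gm_rel_image_mset:
  "(\<And>x. x \<in># M \<Longrightarrow> gm_rel C E {#f x#} {#g x#}) \<Longrightarrow> gm_rel C E (image_mset f M) (image_mset g M)"
proof (induction M)
  case (add x M)
  then have "gm_rel C E ({#f x#} + image_mset f M) ({#g x#} + image_mset g M)"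
    by (intro gm_rel_add) auto
  then show ?case by simp
qed (auto intro: gm_refl)

lemma equiv_gm_rel: "equiv {A. set_mset A \<subseteq> E} {(A, B). gm_rel C E A B}"
  unfolding equiv_def refl_on_def sym_def trans_def
  using gm_rel_set_mset by (blast intro: gm_refl gm_sym gm_trans)

lemma cls_in_GM: "X \<in> E \<Longrightarrow> cls C E X \<in> GM C E"
  unfolding cls_def GM_def by (rule quotientI) simp

lemma cls_eq_iff: "X \<in> E \<Longrightarrow> Y \<in> E \<Longrightarrow> cls C E X = cls C E Y \<longleftrightarrow> gm_rel C E {#X#} {#Y#}"
  unfolding cls_def using eq_equiv_class_iff[OF equiv_gm_rel[of E C]] by simp

lemma M_of_subset_GM: "subcategory C E D \<Longrightarrow> M_of C E D \<subseteq> GM C E"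
  by (auto simp: M_of_def subcategory_def intro: cls_in_GM)

lemma GM_cls:
  assumes "c \<in> GM C E"
  obtains A where "set_mset A \<subseteq> E" "\<And>X. gm_rel C E A {#X#} \<Longrightarrow> cls C E X = c"
proof -
  obtain A where A: "set_mset A \<subseteq> E" "c = {(A, B). gm_rel C E A B} `` {A}"
    using assms unfolding GM_def by (auto elim!: quotientE)
  have "cls C E X = c" if "gm_rel C E A {#X#}" for X
    unfolding cls_def A(2) using equiv_class_eq[OF equiv_gm_rel[of E C], of A "{#X#}"] that by simp
  with A(1) show thesis using that by blast
qed

section \<open>Admissible series and their factors\<close>

lemma adm_series_in_E: "adm_series C E X n xs fs gs F \<Longrightarrow> X \<in> E \<and> F ` {1..n} \<subseteq> E"
  by (cases n) (auto simp: adm_series_def conflation_def)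

lemma adm_series_extend:
  "adm_series C E X n xs fs gs F \<Longrightarrow> conflation C E X f P g d \<Longrightarrow>
    adm_series C E P (Suc n) (xs(Suc n := P)) (fs(Suc n := f)) (gs(Suc n := g)) (F(Suc n := d))"
  unfolding adm_series_def by (auto simp: le_Suc_eq)

lemma image_mset_upd_Suc:
  "image_mset (F(Suc n := d)) (mset_set {1..Suc n}) = add_mset d (image_mset F (mset_set {1..n}))"
proof -
  have "image_mset (F(Suc n := d)) (mset_set {1..n}) = image_mset F (mset_set {1..n})"
    by (rule image_mset_cong) simp
  then show ?thesis by (simp add: atLeastAtMostSuc_conv)
qed

definition has_series_factors :: "('o, 'm) cat \<Rightarrow> 'o set \<Rightarrow> 'o \<Rightarrow> 'o multiset \<Rightarrow> bool" where
  "has_series_factors C E X A \<longleftrightarrow>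
     (\<exists>n xs fs gs F. adm_series C E X n xs fs gs F \<and> image_mset F (mset_set {1..n}) = A)"

lemma has_series_factors_in_E: "has_series_factors C E X A \<Longrightarrow> X \<in> E \<and> set_mset A \<subseteq> E"
  unfolding has_series_factors_def using adm_series_in_E by fastforce

lemma has_series_factors_zero: "z \<in> E \<Longrightarrow> zero_obj C z \<Longrightarrow> has_series_factors C E z {#}"
  unfolding has_series_factors_def adm_series_def by (rule exI[of _ 0]) auto

lemma has_series_factors_extend:
  "has_series_factors C E X A \<Longrightarrow> conflation C E X f P g d \<Longrightarrow> has_series_factors C E P (add_mset d A)"
  unfolding has_series_factors_def using adm_series_extend image_mset_upd_Suc by metis

lemma gm_rel_adm_series:
  assumes "adm_series C E X n xs fs gs F"
  shows "gm_rel C E {#X#} (image_mset F (mset_set {1..n}))"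
proof -
  have "gm_rel C E {#xs k#} (image_mset F (mset_set {1..k}))" if "k \<le> n" for k
    using that
  proof (induction k)
    case 0
    then show ?case using assms by (simp add: adm_series_def gm_zero)
  next
    case (Suc k)
    have c: "conflation C E (xs k) (fs (Suc k)) (xs (Suc k)) (gs (Suc k)) (F (Suc k))"
      using assms Suc.prems unfolding adm_series_def by force
    then have "gm_rel C E ({#xs k#} + {#F (Suc k)#}) (image_mset F (mset_set {1..k}) + {#F (Suc k)#})"
      using Suc by (intro gm_add) (auto simp: conflation_def)
    then show ?case
      using gm_trans[OF gm_confl[OF c]] by (simp add: atLeastAtMostSuc_conv add_mset_commute)
  qed
  then show ?thesis using assms by (auto simp: adm_series_def)
qed

lemma gm_rel_has_series_factors: "has_series_factors C E X A \<Longrightarrow> gm_rel C E {#X#} A"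
  unfolding has_series_factors_def using gm_rel_adm_series by auto

lemma bij_betw_fun_upd_Suc:
  "bij_betw \<sigma> {1..n} {1..n} \<Longrightarrow> bij_betw (\<sigma>(Suc n := Suc n)) {1..Suc n} {1..Suc n}"
proof -
  assume "bij_betw \<sigma> {1..n} {1..n}"
  then have "bij_betw (\<sigma>(Suc n := Suc n)) {1..n} {1..n}"
    by (rule bij_betw_cong[THEN iffD1, rotated]) auto
  moreover have "bij_betw (\<sigma>(Suc n := Suc n)) {Suc n} {Suc n}" by simp
  ultimately show ?thesis
    using bij_betw_combine[of _ "{1..n}" "{1..n}" "{Suc n}" "{Suc n}"] by (simp add: atLeastAtMostSuc_conv)
qed

context exact_cat
begin

lemma has_series_factors_single:
  assumes "X \<in> E"
  shows "has_series_factors C E X {#X#}"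
proof -
  obtain z where z: "z \<in> E" "zero_obj C z" using zero_in_E by blast
  then obtain t where "conflation C E z t X (idt C X) X"
    using zero_to_iso_conflation assms is_iso_idt E_Ob by blast
  then show ?thesis using has_series_factors_extend[OF has_series_factors_zero[OF z]] by simp
qed

lemma has_series_factors_ex: "set_mset A \<subseteq> E \<Longrightarrow> \<exists>X. has_series_factors C E X A"
proof (induction A)
  case empty
  obtain z where "z \<in> E" "zero_obj C z" using zero_in_E by blast
  then show ?case by (blast intro: has_series_factors_zero)
next
  case (add d A)
  then obtain X where X: "has_series_factors C E X A" by auto
  have "X \<in> E" "d \<in> E" using has_series_factors_in_E[OF X] add.prems by auto
  then obtain P f g where "conflation C E X f P g d" using split_conflation by blast
  then show ?case by (blast intro: has_series_factors_extend[OF X])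
qed

lemma gm_rel_iso:
  assumes "X \<in> E" "Y \<in> E" "iso_obj C X Y"
  shows "gm_rel C E {#X#} {#Y#}"
proof -
  obtain z where z: "z \<in> E" "zero_obj C z" using zero_in_E by blast
  obtain f t where "conflation C E z t X f Y"
    using zero_to_iso_conflation[OF z] assms unfolding iso_obj_def by blast
  then have "gm_rel C E {#X#} {#z, Y#}"
    using gm_sym gm_confl by metis
  moreover have "gm_rel C E {#z, Y#} {#Y#}"
    using gm_add[OF gm_zero[OF z], of "{#Y#}"] assms(2) by (simp add: add_mset_commute)
  ultimately show ?thesis by (rule gm_trans)
qed

lemma S_equiv_gm_rel:
  assumes "S_equiv C E X Y"
  shows "Y \<in> E" "gm_rel C E {#X#} {#Y#}"
proof -
  obtain n xs fs gs F ys hs ks G \<sigma> where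
    s: "adm_series C E X n xs fs gs F" "adm_series C E Y n ys hs ks G"
       "bij_betw \<sigma> {1..n} {1..n}" "\<forall>i\<in>{1..n}. iso_obj C (F i) (G (\<sigma> i))"
    using assms unfolding S_equiv_def by blast
  show "Y \<in> E" using adm_series_in_E[OF s(2)] by blast
  have "gm_rel C E (image_mset F (mset_set {1..n})) (image_mset (G \<circ> \<sigma>) (mset_set {1..n}))"
    using s(3,4) adm_series_in_E[OF s(1)] adm_series_in_E[OF s(2)] bij_betwE[OF s(3)]
    by (intro gm_rel_image_mset gm_rel_iso) auto
  moreover have "image_mset (G \<circ> \<sigma>) (mset_set {1..n}) = image_mset G (mset_set {1..n})"
    using s(3) by (simp add: bij_betw_def image_mset_mset_set flip: image_mset.comp)
  ultimately show "gm_rel C E {#X#} {#Y#}"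
    using gm_rel_adm_series[OF s(1)] gm_rel_adm_series[OF s(2)] by (metis gm_sym gm_trans)
qed

lemma S_equiv_if_same_factors:
  assumes "has_series_factors C E X A" "has_series_factors C E Y A"
  shows "S_equiv C E X Y"
proof -
  obtain n xs fs gs F where s: "adm_series C E X n xs fs gs F" "image_mset F (mset_set {1..n}) = A"
    using assms(1) unfolding has_series_factors_def by blast
  obtain m ys hs ks G where t: "adm_series C E Y m ys hs ks G" "image_mset G (mset_set {1..m}) = A"
    using assms(2) unfolding has_series_factors_def by blast
  have "m = n" using arg_cong[where f = size, OF trans[OF s(2) t(2)[symmetric]]] by simp
  then obtain \<sigma> where \<sigma>: "\<sigma> permutes {1..n}" "\<forall>i\<in>{1..n}. F i = G (\<sigma> i)"
    using image_mset_eq_implies_permutes[of "{1..n}" F G] s(2) t(2) by auto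
  have "\<forall>i\<in>{1..n}. iso_obj C (F i) (G (\<sigma> i))"
    using \<sigma>(2) adm_series_in_E[OF s(1)] E_Ob iso_obj_refl by force
  then show ?thesis
    unfolding S_equiv_def using s(1) t(1) \<open>m = n\<close> permutes_imp_bij[OF \<sigma>(1)] by blast
qed

lemma S_equiv_sym:
  assumes "S_equiv C E X Y"
  shows "S_equiv C E Y X"
proof -
  obtain n xs fs gs F ys hs ks G \<sigma> where
    s: "adm_series C E X n xs fs gs F" "adm_series C E Y n ys hs ks G"
       "bij_betw \<sigma> {1..n} {1..n}" "\<forall>i\<in>{1..n}. iso_obj C (F i) (G (\<sigma> i))"
    using assms unfolding S_equiv_def by blast
  let ?\<rho> = "inv_into {1..n} \<sigma>"
  have "\<forall>i\<in>{1..n}. iso_obj C (G i) (F (?\<rho> i))"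
    using s(3,4) iso_obj_sym bij_betw_inv_into_right bij_betwE[OF bij_betw_inv_into[OF s(3)]] by metis
  then show ?thesis
    unfolding S_equiv_def using s(1,2) bij_betw_inv_into[OF s(3)] by blast
qed

lemma S_equiv_extend:
  assumes "S_equiv C E X Y" "conflation C E X f P g d" "conflation C E Y f' Q g' d"
  shows "S_equiv C E P Q"
proof -
  obtain n xs fs gs F ys hs ks G \<sigma> where
    s: "adm_series C E X n xs fs gs F" "adm_series C E Y n ys hs ks G"
       "bij_betw \<sigma> {1..n} {1..n}" "\<forall>i\<in>{1..n}. iso_obj C (F i) (G (\<sigma> i))"
    using assms unfolding S_equiv_def by blast
  have "d \<in> Ob C" using assms(2) E_Ob by (simp add: conflation_def)
  have "iso_obj C ((F(Suc n := d)) i) ((G(Suc n := d)) ((\<sigma>(Suc n := Suc n)) i))"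
    if "i \<in> {1..Suc n}" for i
  proof (cases "i = Suc n")
    case True
    then show ?thesis using iso_obj_refl \<open>d \<in> Ob C\<close> by simp
  next
    case False
    then have "i \<in> {1..n}" using that by auto
    then show ?thesis using s(4) bij_betwE[OF s(3)] False by force
  qed
  then show ?thesis
    unfolding S_equiv_def
    using adm_series_extend[OF s(1) assms(2)] adm_series_extend[OF s(2) assms(3)]
      bij_betw_fun_upd_Suc[OF s(3)] by blast
qed

lemma S_connected_sym: "(S_equiv C E)\<^sup>*\<^sup>* X Y \<Longrightarrow> (S_equiv C E)\<^sup>*\<^sup>* Y X"
  by (induction rule: rtranclp_induct)
    (auto intro: converse_rtranclp_into_rtranclp S_equiv_sym)

lemma S_connected_extend:
  assumes "(S_equiv C E)\<^sup>*\<^sup>* X Y" "X \<in> E" "conflation C E X f P g d" "conflation C E Y f' Q g' d"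
  shows "(S_equiv C E)\<^sup>*\<^sup>* P Q"
  using assms
proof (induction arbitrary: f g P rule: converse_rtranclp_induct)
  case base
  then show ?case
    using S_equiv_if_same_factors has_series_factors_extend[OF has_series_factors_single]
    by blast
next
  case (step X X')
  have "X' \<in> E" "d \<in> E" using S_equiv_gm_rel(1)[OF step(1)] step.prems(2)
    by (auto simp: conflation_def)
  then obtain P' f'' g'' where P': "conflation C E X' f'' P' g'' d"
    using split_conflation by blast
  show ?case
    using converse_rtranclp_into_rtranclp[OF S_equiv_extend[OF step(1) step.prems(2) P']
        step.IH[OF \<open>X' \<in> E\<close> P' step.prems(3)]] .
qed

end

lemma closed_S_rtranclp: "(S_equiv C E)\<^sup>*\<^sup>* X Y \<Longrightarrow> closed_S C E D \<Longrightarrow> X \<in> D \<Longrightarrow> Y \<in> D"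
  by (induction rule: rtranclp_induct) (auto simp: closed_S_def)

definition factors_S_connected :: "('o, 'm) cat \<Rightarrow> 'o set \<Rightarrow> 'o multiset \<Rightarrow> 'o multiset \<Rightarrow> bool" where
  "factors_S_connected C E A B \<longleftrightarrow>
     (\<forall>X Y. has_series_factors C E X A \<longrightarrow> has_series_factors C E Y B \<longrightarrow>
        (S_equiv C E)\<^sup>*\<^sup>* X Y)"

context exact_cat
begin

lemma factors_S_connected_common:
  assumes "has_series_factors C E T A" "has_series_factors C E T B"
  shows "factors_S_connected C E A B"
  unfolding factors_S_connected_def
  using assms S_equiv_if_same_factors by (meson converse_rtranclp_into_rtranclp r_into_rtranclp)

lemma factors_S_connected_add_mset:
  assumes AB: "factors_S_connected C E A B" and "set_mset A \<subseteq> E" "set_mset B \<subseteq> E" "d \<in> E"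
  shows "factors_S_connected C E (add_mset d A) (add_mset d B)"
  unfolding factors_S_connected_def
proof (intro allI impI)
  fix X Y
  assume X: "has_series_factors C E X (add_mset d A)" and Y: "has_series_factors C E Y (add_mset d B)"
  obtain X0 Y0 where X0: "has_series_factors C E X0 A" and Y0: "has_series_factors C E Y0 B"
    using has_series_factors_ex assms(2,3) by metis
  have "X0 \<in> E" "Y0 \<in> E" using has_series_factors_in_E[OF X0] has_series_factors_in_E[OF Y0] by auto
  then obtain P f g Q f' g' where P: "conflation C E X0 f P g d" and Q: "conflation C E Y0 f' Q g' d"
    using split_conflation \<open>d \<in> E\<close> by metis
  have "S_equiv C E X P" "S_equiv C E Q Y"
    using S_equiv_if_same_factors X Y has_series_factors_extend[OF X0 P] has_series_factors_extend[OF Y0 Q]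
    by auto
  moreover have "(S_equiv C E)\<^sup>*\<^sup>* P Q"
    using S_connected_extend[OF _ \<open>X0 \<in> E\<close> P Q] AB X0 Y0 unfolding factors_S_connected_def by blast
  ultimately show "(S_equiv C E)\<^sup>*\<^sup>* X Y"
    by (meson converse_rtranclp_into_rtranclp rtranclp.rtrancl_into_rtrancl)
qed

lemma factors_S_connected_add:
  "factors_S_connected C E A B \<Longrightarrow> set_mset A \<subseteq> E \<Longrightarrow> set_mset B \<subseteq> E \<Longrightarrow>
    set_mset D \<subseteq> E \<Longrightarrow> factors_S_connected C E (A + D) (B + D)"
  by (induction D) (auto intro!: factors_S_connected_add_mset)

lemma gm_rel_factors_S_connected: "gm_rel C E A B \<Longrightarrow> factors_S_connected C E A B"
proof (induction rule: gm_rel.induct)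
  case (gm_refl A)
  show ?case
    unfolding factors_S_connected_def using S_equiv_if_same_factors by blast
next
  case (gm_sym A B)
  then show ?case unfolding factors_S_connected_def using S_connected_sym by blast
next
  case (gm_trans A B D)
  obtain W where "has_series_factors C E W B"
    using has_series_factors_ex conjunct2[OF gm_rel_set_mset[OF gm_trans(1)]] by blast
  then show ?case
    using gm_trans.IH unfolding factors_S_connected_def by (meson rtranclp_trans)
next
  case (gm_add A B D)
  then show ?case
    using factors_S_connected_add gm_rel_set_mset[OF gm_add(1)] by simp
next
  case (gm_zero z)
  show ?case
    by (rule factors_S_connected_common[OF has_series_factors_single has_series_factors_zero])
      (use gm_zero in auto)
next
  case (gm_confl X f Y g Z)
  then have "X \<in> E" "Y \<in> E" by (auto simp: conflation_def)
  have "has_series_factors C E Y {#Z, X#}"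
    by (rule has_series_factors_extend[OF has_series_factors_single[OF \<open>X \<in> E\<close>] gm_confl])
  then show ?case
    using factors_S_connected_common[OF has_series_factors_single[OF \<open>Y \<in> E\<close>]]
    by (simp add: add_mset_commute)
qed

section \<open>The correspondence\<close>

lemma S_connected_if_cls_eq:
  assumes "X \<in> E" "Y \<in> E" "cls C E X = cls C E Y"
  shows "(S_equiv C E)\<^sup>*\<^sup>* X Y"
proof -
  have "factors_S_connected C E {#X#} {#Y#}"
    using gm_rel_factors_S_connected cls_eq_iff[OF assms(1,2)] assms(3) by blast
  then show ?thesis
    using has_series_factors_single[OF assms(1)] has_series_factors_single[OF assms(2)]
    unfolding factors_S_connected_def by blast
qed

lemma closed_S_D_of: "closed_S C E (D_of C E N)"
  unfolding closed_S_def
proof (intro allI impI)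
  fix X Y assume "X \<in> D_of C E N \<and> S_equiv C E X Y"
  then have "X \<in> E" "cls C E X \<in> N" "S_equiv C E X Y" by (auto simp: D_of_def)
  then show "Y \<in> D_of C E N"
    using S_equiv_gm_rel[of X Y] cls_eq_iff[of X E Y C] by (simp add: D_of_def)
qed

lemma subcategory_D_of: "subcategory C E (D_of C E N)"
  unfolding subcategory_def iso_closed_def
proof (intro conjI ballI impI)
  show "D_of C E N \<subseteq> E" by (auto simp: D_of_def)
  fix X Y assume "X \<in> D_of C E N" "Y \<in> E" "iso_obj C X Y"
  then show "Y \<in> D_of C E N"
    using gm_rel_iso[of X Y] cls_eq_iff[of X E Y C] by (simp add: D_of_def)
qed

lemma D_of_M_of:
  assumes "subcategory C E D" "closed_S C E D"
  shows "D_of C E (M_of C E D) = D"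
proof
  have "D \<subseteq> E" using assms(1) by (simp add: subcategory_def)
  then show "D \<subseteq> D_of C E (M_of C E D)" by (auto simp: D_of_def M_of_def)
  show "D_of C E (M_of C E D) \<subseteq> D"
  proof
    fix X assume "X \<in> D_of C E (M_of C E D)"
    then obtain Y where "X \<in> E" "Y \<in> D" "cls C E Y = cls C E X"
      by (auto simp: D_of_def M_of_def)
    then show "X \<in> D"
      using closed_S_rtranclp[OF S_connected_if_cls_eq assms(2)] \<open>D \<subseteq> E\<close> by blast
  qed
qed

lemma M_of_D_of:
  assumes "N \<subseteq> GM C E"
  shows "M_of C E (D_of C E N) = N"
proof
  show "M_of C E (D_of C E N) \<subseteq> N" by (auto simp: M_of_def D_of_def)
  show "N \<subseteq> M_of C E (D_of C E N)"
  proof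
    fix c assume "c \<in> N"
    then obtain A where "set_mset A \<subseteq> E" and c: "\<And>X. gm_rel C E A {#X#} \<Longrightarrow> cls C E X = c"
      using assms GM_cls by blast
    then obtain X where X: "has_series_factors C E X A" using has_series_factors_ex by blast
    have "X \<in> E" using has_series_factors_in_E[OF X] by blast
    moreover have "cls C E X = c" using c[OF gm_sym[OF gm_rel_has_series_factors[OF X]]] .
    ultimately show "c \<in> M_of C E (D_of C E N)" using \<open>c \<in> N\<close> unfolding M_of_def D_of_def by auto
  qed
qed

end

theorem mainTheorem10:
  fixes C :: "('o, 'm) cat" and E :: "'o set"
  assumes "exact_category C E"
  shows "(\<forall>N. N \<subseteq> GM C E \<longrightarrow> closed_S C E (D_of C E N)) \<and>
         (\<forall>D. subcategory C E D \<and> closed_S C E D \<longrightarrow>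
              M_of C E D \<in> Pow (GM C E) \<and> D_of C E (M_of C E D) = D) \<and>
         (\<forall>N \<in> Pow (GM C E).
              subcategory C E (D_of C E N) \<and> closed_S C E (D_of C E N) \<and>
              M_of C E (D_of C E N) = N)"
proof -
  interpret exact_cat C E using assms by unfold_locales
  show ?thesis by (auto simp: closed_S_D_of subcategory_D_of D_of_M_of M_of_D_of M_of_subset_GM)
qed

end
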